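(* Let $F$ be any function from syntax trees to the reals that takes at most $k$ distinct values, and let $T_{init}$ be the number of nodes of the initial tree. Then for both SMO-GP-single and SMO-GP-multi applied to MO-$F(X)=(F(X),C(X))$, the expected number of iterations until the population contains the empty tree is $O(k\,T_{init})$.
   Context: Fix an integer $n\ge 1$; the terminal set is $T=\{x_1,\bar x_1,\dots,x_n,\bar x_n\}$. A syntax tree is either the empty tree or a rooted ordered binary tree whose inner nodes are all labelled by the binary function $J$ (join, exactly two ordered children) and whose leaves are labelled by elements of $T$. The complexity $C(X)$ is the number of nodes of $X$ (0 for the empty tree). In MO-$F$, $F$ is to be maximized and $C$ minimized. Mutation (HVL-Prime applied $k'$ times): each application chooses uniformly at random one of three operations. Substitute: replace a uniformly random leaf by a uniformly random $u\in T$. Insert: choose a uniformly random node $v$ and uniformly random $u\in T$, replace $v$ by a $J$-node with children $u$ and $v$ in uniformly random order (inserting into the empty tree yields the single leaf $u$). Delete: choose a uniformly random leaf $v$ with parent $p$ and sibling $u$, replace $p$ by $u$ (deleting $p$ and $v$; deleting the only leaf of a one-leaf tree yields the empty tree). For single-operation mutation $k'=1$; for multi-operation mutation $k'=1+\mathrm{Pois}(1)$ with $\mathrm{Pois}(1)$ a Poisson random variable with mean 1. Dominance: $Y\succeq X$ iff $F(Y)\ge F(X)$ and $C(Y)\le C(X)$; $Y\succ X$ iff $Y\succeq X$ and ($F(Y)>F(X)$ or $C(Y)<C(X)$). SMO-GP: choose an initial tree $X$ and set $P:=\{X\}$; repeat: choose $X\in P$ uniformly at random, let $Y$ be a mutated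 copy of $X$; if no $Z\in P$ satisfies $Z\succ Y$, set $P:=(P\setminus\{Z\in P: Y\succeq Z\})\cup\{Y\}$. SMO-GP-single uses single-operation mutation, SMO-GP-multi multi-operation mutation. *)

theory Defs
  imports "HOL-Probability.Probability"
begin

text \<open>Terminals: x_i is (i, True), its negation is (i, False), for 1 \<le> i \<le> n.\<close>
type_synonym lit = "nat \<times> bool"

definition terminals :: "nat \<Rightarrow> lit set" where
  "terminals n = {1..n} \<times> UNIV"

datatype tr = Leaf lit | J tr tr

text \<open>Syntax trees: None is the empty tree.\<close>
type_synonym stree = "tr option"

fun lits_tr :: "tr \<Rightarrow> lit set" where
  "lits_tr (Leaf u) = {u}"
| "lits_tr (J l r) = lits_tr l \<union> lits_tr r"

definition valid :: "nat \<Rightarrow> stree \<Rightarrow> bool" where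
  "valid n X = (case X of None \<Rightarrow> True | Some t \<Rightarrow> lits_tr t \<subseteq> terminals n)"

fun nnodes :: "tr \<Rightarrow> nat" where
  "nnodes (Leaf u) = 1"
| "nnodes (J l r) = 1 + nnodes l + nnodes r"

definition C :: "stree \<Rightarrow> nat" where
  "C X = (case X of None \<Rightarrow> 0 | Some t \<Rightarrow> nnodes t)"

text \<open>Node positions as paths (False = left child, True = right child).\<close>
fun pos :: "tr \<Rightarrow> bool list set" where
  "pos (Leaf u) = {[]}"
| "pos (J l r) = {[]} \<union> Cons False ` pos l \<union> Cons True ` pos r"

fun leafpos :: "tr \<Rightarrow> bool list set" where
  "leafpos (Leaf u) = {[]}"
| "leafpos (J l r) = Cons False ` leafpos l \<union> Cons True ` leafpos r"

fun subtree :: "tr \<Rightarrow> bool list \<Rightarrow> tr" where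
  "subtree t [] = t"
| "subtree (J l r) (False # p) = subtree l p"
| "subtree (J l r) (True # p) = subtree r p"
| "subtree (Leaf u) (b # p) = Leaf u"

fun replace :: "tr \<Rightarrow> bool list \<Rightarrow> tr \<Rightarrow> tr" where
  "replace t [] s = s"
| "replace (J l r) (False # p) s = J (replace l p s) r"
| "replace (J l r) (True # p) s = J l (replace r p s)"
| "replace (Leaf u) (b # p) s = Leaf u"

definition substitute_op :: "nat \<Rightarrow> stree \<Rightarrow> stree pmf" where
  "substitute_op n X = (case X of
      None \<Rightarrow> return_pmf None
    | Some t \<Rightarrow>
        do { p \<leftarrow> pmf_of_set (leafpos t);
             u \<leftarrow> pmf_of_set (terminals n);
             return_pmf (Some (replace t p (Leaf u))) })"

definition insert_op :: "nat \<Rightarrow> stree \<Rightarrow> stree pmf" where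
  "insert_op n X = (case X of
      None \<Rightarrow> map_pmf (\<lambda>u. Some (Leaf u)) (pmf_of_set (terminals n))
    | Some t \<Rightarrow>
        do { p \<leftarrow> pmf_of_set (pos t);
             u \<leftarrow> pmf_of_set (terminals n);
             b \<leftarrow> bernoulli_pmf (1/2);
             return_pmf (Some (replace t p
               (if b then J (Leaf u) (subtree t p) else J (subtree t p) (Leaf u)))) })"

text \<open>Delete: choose a uniformly random leaf v with parent p and sibling u, replace p by u;
  deleting the only leaf of a one-leaf tree yields the empty tree
  (the empty tree has no leaf and is left unchanged).\<close>
definition delete_op :: "stree \<Rightarrow> stree pmf" where
  "delete_op X = (case X of
      None \<Rightarrow> return_pmf None
    | Some t \<Rightarrow>
        do { p \<leftarrow> pmf_of_set (leafpos t);
             return_pmf (if p = [] then None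
               else Some (replace t (butlast p) (subtree t (butlast p @ [\<not> last p])))) })"

definition hvl_prime :: "nat \<Rightarrow> stree \<Rightarrow> stree pmf" where
  "hvl_prime n X = do { op \<leftarrow> pmf_of_set {0::nat, 1, 2};
      (if op = 0 then substitute_op n X else if op = 1 then insert_op n X else delete_op X) }"

fun hvl_iter :: "nat \<Rightarrow> nat \<Rightarrow> stree \<Rightarrow> stree pmf" where
  "hvl_iter n 0 X = return_pmf X"
| "hvl_iter n (Suc k) X = bind_pmf (hvl_prime n X) (hvl_iter n k)"

definition mutate_single :: "nat \<Rightarrow> stree \<Rightarrow> stree pmf" where
  "mutate_single n X = hvl_iter n 1 X"

definition mutate_multi :: "nat \<Rightarrow> stree \<Rightarrow> stree pmf" where
  "mutate_multi n X = bind_pmf (poisson_pmf 1) (\<lambda>j. hvl_iter n (1 + j) X)"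

definition weakly_dom :: "(stree \<Rightarrow> real) \<Rightarrow> stree \<Rightarrow> stree \<Rightarrow> bool" where
  "weakly_dom F Y X \<longleftrightarrow> F Y \<ge> F X \<and> C Y \<le> C X"

definition strictly_dom :: "(stree \<Rightarrow> real) \<Rightarrow> stree \<Rightarrow> stree \<Rightarrow> bool" where
  "strictly_dom F Y X \<longleftrightarrow> weakly_dom F Y X \<and> (F Y > F X \<or> C Y < C X)"

definition smo_step :: "(stree \<Rightarrow> stree pmf) \<Rightarrow> (stree \<Rightarrow> real) \<Rightarrow> stree set \<Rightarrow> stree set pmf" where
  "smo_step mut F P = do { X \<leftarrow> pmf_of_set P; Y \<leftarrow> mut X;
      return_pmf (if \<exists>Z\<in>P. strictly_dom F Z Y then P
                   else {Z \<in> P. \<not> weakly_dom F Y Z} \<union> {Y}) }"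

definition stopped_step :: "(stree \<Rightarrow> stree pmf) \<Rightarrow> (stree \<Rightarrow> real) \<Rightarrow> stree set \<Rightarrow> stree set pmf" where
  "stopped_step mut F P = (if None \<in> P then return_pmf P else smo_step mut F P)"

fun pop_after :: "(stree \<Rightarrow> stree pmf) \<Rightarrow> (stree \<Rightarrow> real) \<Rightarrow> stree \<Rightarrow> nat \<Rightarrow> stree set pmf" where
  "pop_after mut F X0 0 = return_pmf {X0}"
| "pop_after mut F X0 (Suc t) = bind_pmf (pop_after mut F X0 t) (stopped_step mut F)"

text \<open>Expected number of iterations until the population contains the empty tree,
  E[T] = sum over t of Pr[T > t] (possibly infinite).\<close>
definition expected_time :: "(stree \<Rightarrow> stree pmf) \<Rightarrow> (stree \<Rightarrow> real) \<Rightarrow> stree \<Rightarrow> ennreal" where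
  "expected_time mut F X0 =
     (\<Sum>t. ennreal (measure_pmf.prob (pop_after mut F X0 t) {P. None \<notin> P}))"

end

theory Submission
  imports Defs
begin

(* Let g(P) be the smallest complexity in the population P.  The
   population always consists of valid trees with pairwise different F-values, so
   |P| \<le> k; and g never increases, since a new individual can only evict trees it
   weakly dominates, hence of larger or equal complexity.  If P does not contain
   the empty tree, selecting a tree of complexity g(P) (probability \<ge> 1/k) and
   mutating it by a single Delete (probability 1/3, or 1/(3e) for the multi-operation
   mutation, which performs exactly one operation with probability 1/e) creates a
   strictly smaller tree, which is never rejected; so g drops by at least one with
   probability \<ge> r/k.  An additive drift argument on g, which starts at C(X0),
   gives an expected time of at most k C(X0)/r. *)

lemma additive_drift:
  fixes \<mu> :: "nat \<Rightarrow> 's pmf" and step :: "'s \<Rightarrow> 's pmf" and h :: "'s \<Rightarrow> ennreal"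
  assumes \<mu>_Suc: "\<And>t. \<mu> (Suc t) = bind_pmf (\<mu> t) step"
    and inv_start: "\<And>x. x \<in> set_pmf (\<mu> 0) \<Longrightarrow> I x"
    and inv_step: "\<And>x y. I x \<Longrightarrow> y \<in> set_pmf (step x) \<Longrightarrow> I y"
    and drift: "\<And>x. I x \<Longrightarrow> (\<integral>\<^sup>+y. h y \<partial>step x) + c * indicator S x \<le> h x"
  shows "c * (\<Sum>t. emeasure (measure_pmf (\<mu> t)) S) \<le> (\<integral>\<^sup>+x. h x \<partial>\<mu> 0)"
proof -
  let ?H = "\<lambda>t. \<integral>\<^sup>+x. h x \<partial>\<mu> t"
  let ?e = "\<lambda>t. emeasure (measure_pmf (\<mu> t)) S"
  have inv: "I x" if "x \<in> set_pmf (\<mu> t)" for x t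
    using that by (induction t arbitrary: x) (auto simp: \<mu>_Suc inv_start intro: inv_step)
  have one_step: "?H (Suc t) + c * ?e t \<le> ?H t" for t
  proof -
    have "?H (Suc t) + c * ?e t = (\<integral>\<^sup>+x. (\<integral>\<^sup>+y. h y \<partial>step x) + c * indicator S x \<partial>\<mu> t)"
      by (simp add: \<mu>_Suc nn_integral_add nn_integral_cmult)
    also have "\<dots> \<le> ?H t"
      by (intro nn_integral_mono_AE AE_pmfI drift inv)
    finally show ?thesis .
  qed
  have partial: "?H t + c * (\<Sum>s<t. ?e s) \<le> ?H 0" for t
  proof (induction t)
    case (Suc t)
    have "?H (Suc t) + c * (\<Sum>s<Suc t. ?e s) = (?H (Suc t) + c * ?e t) + c * (\<Sum>s<t. ?e s)"
      by (simp add: distrib_left algebra_simps)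
    also have "\<dots> \<le> ?H t + c * (\<Sum>s<t. ?e s)"
      using one_step by (rule add_right_mono)
    also have "\<dots> \<le> ?H 0" by (rule Suc.IH)
    finally show ?case .
  qed simp
  have "c * (\<Sum>t. ?e t) = (SUP t. c * (\<Sum>s<t. ?e s))"
    by (simp add: suminf_eq_SUP SUP_mult_left_ennreal)
  also have "\<dots> \<le> ?H 0"
  proof (rule SUP_least)
    fix t
    have "c * (\<Sum>s<t. ?e s) \<le> ?H t + c * (\<Sum>s<t. ?e s)" by simp
    then show "c * (\<Sum>s<t. ?e s) \<le> ?H 0" using partial order_trans by blast
  qed
  finally show ?thesis .
qed

lemma expected_decrease_nat:
  fixes M :: "'s pmf" and h :: "'s \<Rightarrow> nat"
  assumes mono: "\<And>y. y \<in> set_pmf M \<Longrightarrow> h y \<le> a"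
    and progress: "p \<le> emeasure (measure_pmf M) {y. h y < a}"
  shows "(\<integral>\<^sup>+y. of_nat (h y) \<partial>M) + p \<le> of_nat a"
proof -
  have pointwise: "of_nat (h y) + indicator {y. h y < a} y \<le> (of_nat a :: ennreal)"
    if "y \<in> set_pmf M" for y
  proof (cases "h y < a")
    case True
    then have "(of_nat (Suc (h y)) :: ennreal) \<le> of_nat a" by (intro of_nat_mono) simp
    then show ?thesis using True by (simp add: add.commute)
  qed (use mono[OF that] in simp)
  have "(\<integral>\<^sup>+y. of_nat (h y) \<partial>M) + p
      \<le> (\<integral>\<^sup>+y. of_nat (h y) \<partial>M) + emeasure (measure_pmf M) {y. h y < a}"
    using progress by (rule add_left_mono)
  also have "\<dots> = (\<integral>\<^sup>+y. of_nat (h y) + indicator {y. h y < a} y \<partial>M)"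
    by (subst nn_integral_add) auto
  also have "\<dots> \<le> (\<integral>\<^sup>+y. of_nat a \<partial>M)"
    by (intro nn_integral_mono_AE AE_pmfI pointwise)
  also have "\<dots> = of_nat a" by (simp add: measure_pmf.emeasure_space_1)
  finally show ?thesis .
qed

lemma lits_subtree: "lits_tr (subtree t p) \<subseteq> lits_tr t"
  by (induction t p rule: subtree.induct) auto

lemma lits_replace: "lits_tr (replace t p s) \<subseteq> lits_tr t \<union> lits_tr s"
  by (induction t p s rule: replace.induct) auto

lemma finite_leafpos: "finite (leafpos t)" and leafpos_nonempty: "leafpos t \<noteq> {}"
  by (induction t) auto

lemma set_pmf_terminals: "n \<ge> 1 \<Longrightarrow> set_pmf (pmf_of_set (terminals n)) = terminals n"
  by (auto simp: terminals_def)

lemma valid_None [simp]: "valid n None"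
  and valid_Some [simp]: "valid n (Some t) \<longleftrightarrow> lits_tr t \<subseteq> terminals n"
  by (simp_all add: valid_def)

lemma nnodes_pos: "0 < nnodes t"
  by (cases t) auto

lemma nnodes_delete_less:
  assumes "p \<in> leafpos t" and "p \<noteq> []"
  shows "nnodes (replace t (butlast p) (subtree t (butlast p @ [\<not> last p]))) < nnodes t"
  using assms
proof (induction t arbitrary: p)
  case (J l r)
  then have "(\<exists>q. p = False # q \<and> q \<in> leafpos l) \<or> (\<exists>q. p = True # q \<and> q \<in> leafpos r)"
    by auto
  then obtain b q where p: "p = b # q" and q: "q \<in> (if b then leafpos r else leafpos l)"
    by (metis (full_types))
  show ?case
  proof (cases "q = []")
    case True
    then show ?thesis using p by (cases b) auto
  next
    case False
    then have "butlast p = b # butlast q" "last p = last q" using p by auto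
    then show ?thesis using J.IH[of q] q False by (cases b) auto
  qed
qed simp

lemma hvl_prime_valid:
  assumes n: "n \<ge> 1" and X: "valid n X"
  shows "set_pmf (hvl_prime n X) \<subseteq> {Y. valid n Y}"
proof -
  note T = set_pmf_terminals[OF n]
  have "set_pmf (substitute_op n X) \<subseteq> {Y. valid n Y}"
    using X T by (auto simp: substitute_op_def
        dest!: lits_replace[THEN subsetD] split: option.splits)
  moreover have "set_pmf (insert_op n X) \<subseteq> {Y. valid n Y}"
    using X T by (auto simp: insert_op_def
        dest!: lits_replace[THEN subsetD] lits_subtree[THEN subsetD]
        split: option.splits if_splits) force+
  moreover have "set_pmf (delete_op X) \<subseteq> {Y. valid n Y}"
    using X by (auto simp: delete_op_def
        dest!: lits_subtree[THEN subsetD] lits_replace[THEN subsetD] split: option.splits)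
  ultimately show ?thesis by (auto simp: hvl_prime_def)
qed

lemma hvl_iter_valid: "n \<ge> 1 \<Longrightarrow> valid n X \<Longrightarrow> set_pmf (hvl_iter n k X) \<subseteq> {Y. valid n Y}"
  by (induction k arbitrary: X) (use hvl_prime_valid in fastforce)+

lemma mutate_single_valid: "n \<ge> 1 \<Longrightarrow> valid n X \<Longrightarrow> set_pmf (mutate_single n X) \<subseteq> {Y. valid n Y}"
  unfolding mutate_single_def by (rule hvl_iter_valid)

lemma mutate_multi_valid: "n \<ge> 1 \<Longrightarrow> valid n X \<Longrightarrow> set_pmf (mutate_multi n X) \<subseteq> {Y. valid n Y}"
proof -
  assume "n \<ge> 1" "valid n X"
  then have "set_pmf (hvl_iter n (1 + j) X) \<subseteq> {Y. valid n Y}" for j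
    by (rule hvl_iter_valid)
  then show ?thesis unfolding mutate_multi_def by (auto simp: set_bind_pmf)
qed

lemma delete_op_shrinks: "emeasure (measure_pmf (delete_op (Some t))) {Y. C Y < C (Some t)} = 1"
proof -
  have "set_pmf (delete_op (Some t)) \<subseteq> {Y. C Y < C (Some t)}"
    using finite_leafpos[of t] leafpos_nonempty[of t] nnodes_delete_less[of _ t] nnodes_pos[of t]
    by (auto simp: delete_op_def C_def split: if_splits)
  then show ?thesis
    by (intro measure_pmf.emeasure_eq_1_AE) (auto simp: AE_measure_pmf_iff)
qed

text \<open>One HVL-Prime step chooses Delete with probability 1/3.\<close>
lemma hvl_prime_shrinks:
  "emeasure (measure_pmf (hvl_prime n (Some t))) {Y. C Y < C (Some t)} \<ge> ennreal (1/3)"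
proof -
  let ?E = "{Y. C Y < C (Some t)}"
  let ?op = "\<lambda>op::nat. if op = 0 then substitute_op n (Some t)
                       else if op = 1 then insert_op n (Some t) else delete_op (Some t)"
  have "emeasure (measure_pmf (hvl_prime n (Some t))) ?E
      = (\<Sum>op\<in>{0,1,2}. emeasure (measure_pmf (?op op)) ?E) / 3"
    unfolding hvl_prime_def by (simp add: nn_integral_pmf_of_set)
  also have "\<dots> \<ge> emeasure (measure_pmf (?op 2)) ?E / 3"
    by (intro divide_right_mono_ennreal member_le_sum) auto
  also have "emeasure (measure_pmf (?op 2)) ?E / 3 = ennreal (1/3)"
    using delete_op_shrinks[of t] ennreal_divide_numeral[of 1 "num.Bit1 num.One"] by simp
  finally show ?thesis .
qed

lemma mutate_single_shrinks:
  "emeasure (measure_pmf (mutate_single n (Some t))) {Y. C Y < C (Some t)} \<ge> ennreal (1/3)"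
  using hvl_prime_shrinks[of n t] by (simp add: mutate_single_def)

text \<open>Multi-operation mutation performs exactly one operation with probability 1/e.\<close>
lemma mutate_multi_shrinks:
  "emeasure (measure_pmf (mutate_multi n (Some t))) {Y. C Y < C (Some t)} \<ge> ennreal (exp (-1) / 3)"
proof -
  let ?E = "{Y. C Y < C (Some t)}"
  let ?h = "\<lambda>j. emeasure (measure_pmf (hvl_iter n (1 + j) (Some t))) ?E"
  have "ennreal (exp (-1) / 3) = ennreal (1/3) * ennreal (exp (-1))"
    by (simp add: ennreal_mult[symmetric])
  also have "\<dots> \<le> ?h 0 * ennreal (exp (-1))"
    using hvl_prime_shrinks[of n t] by (intro mult_right_mono) auto
  also have "\<dots> = (\<integral>\<^sup>+j. ?h j * indicator {0} j \<partial>poisson_pmf 1)"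
    by (simp add: emeasure_pmf_single)
  also have "\<dots> \<le> (\<integral>\<^sup>+j. ?h j \<partial>poisson_pmf 1)"
    by (intro nn_integral_mono) (auto split: split_indicator)
  also have "\<dots> = emeasure (measure_pmf (mutate_multi n (Some t))) ?E"
    by (simp add: mutate_multi_def)
  finally show ?thesis .
qed

definition accept :: "(stree \<Rightarrow> real) \<Rightarrow> stree set \<Rightarrow> stree \<Rightarrow> stree set" where
  "accept F P Y = (if \<exists>Z\<in>P. strictly_dom F Z Y then P
                   else {Z \<in> P. \<not> weakly_dom F Y Z} \<union> {Y})"

lemma smo_step_accept: "smo_step mut F P = pmf_of_set P \<bind> (\<lambda>X. map_pmf (accept F P) (mut X))"
  by (simp add: smo_step_def accept_def map_pmf_def)

text \<open>The potential of the drift argument: the least complexity in the population.\<close>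
definition min_complexity :: "stree set \<Rightarrow> nat" where
  "min_complexity P = Min (C ` P)"

lemma min_complexity_le: "finite P \<Longrightarrow> X \<in> P \<Longrightarrow> min_complexity P \<le> C X"
  unfolding min_complexity_def by simp

lemma min_complexity_attained:
  assumes "finite P" "P \<noteq> {}" obtains X where "X \<in> P" "C X = min_complexity P"
proof -
  have "Min (C ` P) \<in> C ` P" using assms by (intro Min_in) auto
  then show ?thesis using that unfolding min_complexity_def by auto
qed

text \<open>A reachable population: finite, non-empty, valid, and with pairwise different
  F-values (two trees with equal F-value are comparable, so one evicts the other).\<close>
definition population :: "nat \<Rightarrow> (stree \<Rightarrow> real) \<Rightarrow> stree set \<Rightarrow> bool" where
  "population n F P \<longleftrightarrow> finite P \<and> P \<noteq> {} \<and> P \<subseteq> {X. valid n X} \<and> inj_on F P"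

lemma population_card:
  "population n F P \<Longrightarrow> finite (F ` {X. valid n X}) \<Longrightarrow> card P \<le> card (F ` {X. valid n X})"
  unfolding population_def using card_image[of F P] card_mono[of "F ` {X. valid n X}" "F ` P"]
  by auto

lemma accept_inj_on:
  assumes inj: "inj_on F P" shows "inj_on F (accept F P Y)"
proof (cases "\<exists>Z\<in>P. strictly_dom F Z Y")
  case False
  let ?S = "{Z \<in> P. \<not> weakly_dom F Y Z}"
  have "F Y \<notin> F ` ?S"
    using False by (auto simp: strictly_dom_def weakly_dom_def)
  moreover have "inj_on F ?S" using inj by (rule inj_on_subset) auto
  ultimately have "inj_on F (insert Y ?S)" by (simp add: inj_on_insert) blast
  then show ?thesis using False by (simp add: accept_def)
qed (simp add: accept_def inj)

lemma population_accept:
  "population n F P \<Longrightarrow> valid n Y \<Longrightarrow> population n F (accept F P Y)"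
  using accept_inj_on[of F P Y] by (auto simp: population_def accept_def)

text \<open>The least complexity never increases: a tree leaves the population only when
  the newcomer weakly dominates it, and is thus at most as complex.\<close>
lemma min_complexity_accept:
  assumes "finite P" "P \<noteq> {}" shows "min_complexity (accept F P Y) \<le> min_complexity P"
proof -
  obtain X where X: "X \<in> P" "C X = min_complexity P"
    using assms by (rule min_complexity_attained)
  have fin: "finite (accept F P Y)" using assms by (simp add: accept_def)
  have "\<exists>W\<in>accept F P Y. C W \<le> C X"
    using X(1) by (cases "weakly_dom F Y X") (auto simp: accept_def weakly_dom_def)
  then show ?thesis using X min_complexity_le[OF fin] by force
qed

lemma accept_simpler:
  assumes "finite P" and Y: "C Y < min_complexity P"
  shows "min_complexity (accept F P Y) \<le> C Y"
proof -
  have "\<not> strictly_dom F Z Y" if "Z \<in> P" for Z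
    using min_complexity_le[OF assms(1) that] Y by (auto simp: strictly_dom_def weakly_dom_def)
  then have "Y \<in> accept F P Y" by (auto simp: accept_def)
  then show ?thesis using assms(1) by (intro min_complexity_le) (auto simp: accept_def)
qed

lemma stopped_step_population:
  assumes P: "population n F P"
    and mut_valid: "\<And>X. valid n X \<Longrightarrow> set_pmf (mut X) \<subseteq> {Y. valid n Y}"
    and Q: "Q \<in> set_pmf (stopped_step mut F P)"
  shows "population n F Q \<and> min_complexity Q \<le> min_complexity P"
proof (cases "None \<in> P")
  case False
  have fin: "finite P" and ne: "P \<noteq> {}" and valid_P: "P \<subseteq> {X. valid n X}"
    using P by (auto simp: population_def)
  then obtain X Y where "X \<in> P" "Y \<in> set_pmf (mut X)" "Q = accept F P Y"
    using Q False by (auto simp: stopped_step_def smo_step_accept)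
  then have "valid n Y" and Q_eq: "Q = accept F P Y" using mut_valid valid_P by auto
  then show ?thesis
    using population_accept[OF P] min_complexity_accept[OF fin ne] by simp
qed (use P Q in \<open>simp add: stopped_step_def\<close>)

text \<open>If the population lacks the empty tree, the potential drops with probability at
  least r/|P|: select a least complex tree and let the mutation shrink it.\<close>
lemma stopped_step_progress:
  assumes P: "population n F P" and no_empty: "None \<notin> P"
    and shrink: "\<And>t. valid n (Some t) \<Longrightarrow>
                   ennreal r \<le> emeasure (measure_pmf (mut (Some t))) {Y. C Y < C (Some t)}"
  shows "ennreal r / card P
           \<le> emeasure (measure_pmf (stopped_step mut F P)) {Q. min_complexity Q < min_complexity P}"
proof -
  have fin: "finite P" and ne: "P \<noteq> {}" and valid_P: "P \<subseteq> {X. valid n X}"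
    using P by (auto simp: population_def)
  let ?E = "{Q. min_complexity Q < min_complexity P}"
  let ?success = "\<lambda>X. emeasure (measure_pmf (mut X)) (accept F P -` ?E)"
  obtain Xm where Xm: "Xm \<in> P" "C Xm = min_complexity P"
    using fin ne by (rule min_complexity_attained)
  then obtain t where t: "Xm = Some t" using no_empty by (cases Xm) auto
  have "ennreal r \<le> emeasure (measure_pmf (mut Xm)) {Y. C Y < C Xm}"
    using shrink[of t] Xm valid_P t by auto
  also have "\<dots> \<le> ?success Xm"
  proof (rule emeasure_mono)
    show "{Y. C Y < C Xm} \<subseteq> accept F P -` ?E"
    proof
      fix Y assume "Y \<in> {Y. C Y < C Xm}"
      then have "C Y < min_complexity P" using Xm(2) by simp
      then show "Y \<in> accept F P -` ?E"
        using accept_simpler[OF fin, of Y F] by simp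
    qed
  qed simp
  also have "\<dots> \<le> (\<Sum>X\<in>P. ?success X)"
    using fin Xm by (intro member_le_sum) auto
  finally have "ennreal r / card P \<le> (\<Sum>X\<in>P. ?success X) / card P"
    by (rule divide_right_mono_ennreal)
  also have "\<dots> = emeasure (measure_pmf (stopped_step mut F P)) ?E"
    using no_empty fin ne by (simp add: stopped_step_def smo_step_accept nn_integral_pmf_of_set)
  finally show ?thesis .
qed

lemma stopped_step_drift:
  assumes P: "population n F P" and r: "r > 0" and K: "card P \<le> K"
    and mut_valid: "\<And>X. valid n X \<Longrightarrow> set_pmf (mut X) \<subseteq> {Y. valid n Y}"
    and shrink: "\<And>t. valid n (Some t) \<Longrightarrow>
                   ennreal r \<le> emeasure (measure_pmf (mut (Some t))) {Y. C Y < C (Some t)}"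
  shows "(\<integral>\<^sup>+Q. of_nat (min_complexity Q) \<partial>stopped_step mut F P)
           + ennreal (r / K) * indicator {P. None \<notin> P} P \<le> of_nat (min_complexity P)"
proof (cases "None \<in> P")
  case False
  have "card P > 0" using P by (auto simp: population_def card_gt_0_iff)
  then have "r / K \<le> r / card P"
    using r K by (intro divide_left_mono) auto
  then have "ennreal (r / K) \<le> ennreal (r / card P)"
    by (rule ennreal_leI)
  also have "\<dots> = ennreal r / card P"
    using r \<open>card P > 0\<close> by (simp add: ennreal_of_nat_eq_real_of_nat divide_ennreal)
  also have "\<dots> \<le> emeasure (measure_pmf (stopped_step mut F P))
                    {Q. min_complexity Q < min_complexity P}"
    using P False shrink by (rule stopped_step_progress)
  finally have progress: "ennreal (r / K) \<le> emeasure (measure_pmf (stopped_step mut F P))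
                    {Q. min_complexity Q < min_complexity P}" .
  have "(\<integral>\<^sup>+Q. of_nat (min_complexity Q) \<partial>stopped_step mut F P) + ennreal (r / K)
          \<le> of_nat (min_complexity P)"
  proof (rule expected_decrease_nat[OF _ progress])
    fix Q assume "Q \<in> set_pmf (stopped_step mut F P)"
    with P mut_valid show "min_complexity Q \<le> min_complexity P"
      by (blast dest: stopped_step_population)
  qed
  then show ?thesis using False by simp
qed (simp add: stopped_step_def)

theorem smo_gp_expected_time:
  assumes r: "r > 0"
    and mut_valid: "\<And>X. valid n X \<Longrightarrow> set_pmf (mut X) \<subseteq> {Y. valid n Y}"
    and shrink: "\<And>t. valid n (Some t) \<Longrightarrow>
                   ennreal r \<le> emeasure (measure_pmf (mut (Some t))) {Y. C Y < C (Some t)}"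
    and X0: "valid n X0"
    and fin: "finite (F ` {X. valid n X})" and k: "card (F ` {X. valid n X}) \<le> k"
  shows "expected_time mut F X0 \<le> ennreal (real k * real (C X0) / r)"
proof -
  define K where "K = card (F ` {X. valid n X})"
  have "F None \<in> F ` {X. valid n X}" by simp
  then have "K > 0" using fin unfolding K_def by (metis card_gt_0_iff empty_iff)
  have "ennreal (r / K) * expected_time mut F X0
        \<le> (\<integral>\<^sup>+P. of_nat (min_complexity P) \<partial>pop_after mut F X0 0)"
    unfolding expected_time_def measure_pmf.emeasure_eq_measure[symmetric]
  proof (rule additive_drift[where I = "population n F"])
    show "population n F Q" if "population n F P" "Q \<in> set_pmf (stopped_step mut F P)" for P Q
      using stopped_step_population[OF that(1) mut_valid that(2)] by blast
    show "(\<integral>\<^sup>+Q. of_nat (min_complexity Q) \<partial>stopped_step mut F P)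
            + ennreal (r / K) * indicator {P. None \<notin> P} P \<le> of_nat (min_complexity P)"
      if "population n F P" for P
      using that r population_card[OF that fin] mut_valid shrink unfolding K_def
      by (rule stopped_step_drift)
  qed (use X0 in \<open>simp_all add: population_def\<close>)
  also have "\<dots> = of_nat (C X0)" by (simp add: min_complexity_def)
  finally have scaled: "ennreal (r / K) * expected_time mut F X0 \<le> of_nat (C X0)" .
  have "expected_time mut F X0 = ennreal (K / r) * (ennreal (r / K) * expected_time mut F X0)"
    using r \<open>K > 0\<close> by (simp add: mult.assoc[symmetric] ennreal_mult[symmetric])
  also have "\<dots> \<le> ennreal (K / r) * of_nat (C X0)"
    using scaled by (rule mult_left_mono) simp
  also have "\<dots> = ennreal (real K * real (C X0) / r)"
    using r by (simp add: ennreal_of_nat_eq_real_of_nat ennreal_mult[symmetric])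
  also have "\<dots> \<le> ennreal (real k * real (C X0) / r)"
  proof -
    have "real K * real (C X0) \<le> real k * real (C X0)"
      using k by (intro mult_right_mono) (auto simp: K_def)
    then show ?thesis using r by (intro ennreal_leI divide_right_mono) auto
  qed
  finally show ?thesis .
qed

text \<open>For both mutation operators the shrinking probability is a constant
  (1/3 and 1/(3e)), and 3 \<le> 3e \<le> 9 gives the common constant 9.\<close>
theorem lemma1:
  "\<exists>c::real. c > 0 \<and>
     (\<forall>(n::nat) (k::nat) (F::stree \<Rightarrow> real) (X0::stree).
        n \<ge> 1 \<longrightarrow> valid n X0 \<longrightarrow>
        finite (F ` {X. valid n X}) \<longrightarrow> card (F ` {X. valid n X}) \<le> k \<longrightarrow>
        expected_time (mutate_single n) F X0 \<le> ennreal (c * real k * real (C X0)) \<and>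
        expected_time (mutate_multi n) F X0 \<le> ennreal (c * real k * real (C X0)))"
proof (intro exI[of _ 9] conjI allI impI)
  fix n k and F :: "stree \<Rightarrow> real" and X0
  assume n: "n \<ge> 1" and X0: "valid n X0"
    and fin: "finite (F ` {X. valid n X})" and k: "card (F ` {X. valid n X}) \<le> k"
  have "expected_time (mutate_single n) F X0 \<le> ennreal (real k * real (C X0) / (1/3))"
    using _ mutate_single_valid[OF n] mutate_single_shrinks X0 fin k
    by (rule smo_gp_expected_time) simp
  also have "\<dots> \<le> ennreal (9 * real k * real (C X0))"
    by (intro ennreal_leI) simp
  finally show "expected_time (mutate_single n) F X0 \<le> ennreal (9 * real k * real (C X0))" .
  have "expected_time (mutate_multi n) F X0 \<le> ennreal (real k * real (C X0) / (exp (-1) / 3))"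
    using _ mutate_multi_valid[OF n] mutate_multi_shrinks X0 fin k
    by (rule smo_gp_expected_time) simp
  also have "\<dots> = ennreal (3 * exp 1 * (real k * real (C X0)))"
    by (simp add: exp_minus field_simps)
  also have "\<dots> \<le> ennreal (3 * 3 * (real k * real (C X0)))"
    using exp_le by (intro ennreal_leI mult_right_mono mult_left_mono) auto
  also have "\<dots> = ennreal (9 * real k * real (C X0))" by simp
  finally show "expected_time (mutate_multi n) F X0 \<le> ennreal (9 * real k * real (C X0))" .
qed simp

end
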